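(* Let $\alpha\in\mathbb{R}$ and $0<\beta\le\frac14$. Then $\Theta_\alpha$ maps $\mathfrak{T}_1(F_1(\alpha,2\beta))$ bijectively onto $\mathfrak{T}_2(F_2(\alpha,2\beta))$; $\Theta_\alpha(\mathfrak{S}_1(F_1(\alpha,\beta)))=\mathfrak{S}_2(F_2(\alpha,\beta))$; and $\Theta_\alpha(|p|^2)=|\Theta_\alpha(p)|^2$ for every $p\in\mathfrak{T}_1(F_1(\alpha,\beta))$.
   Context: $\mathbb{T}=\mathbb{R}/\mathbb{Z}$, $e_j(x)=e^{2\pi i jx}$, $e_{(j,k)}(x,y)=e_j(x)e_k(y)$. $\mathfrak{T}_d$ is the algebra of trigonometric polynomials on $\mathbb{T}^d$ (finite frequency set); for $F\subseteq\mathbb{Z}^d$, $\mathfrak{T}_d(F)=\{t\in\mathfrak{T}_d:\mathrm{freq}(t)\subseteq F\}$ and $\mathfrak{S}_d(F)=\{|p|^2:p\in\mathfrak{T}_d(F)\}$. For $\alpha\in\mathbb{R}$, $\theta_\alpha(j)$ is the smallest integer minimizing $|\theta_\alpha(j)-j\alpha|$, and $\Theta_\alpha:\mathfrak{T}_1\to\mathfrak{T}_2$ is $\Theta_\alpha(t)(x,y)=\sum_{j}\widehat t(j)e_j(x)e_{\theta_\alpha(j)}(y)$. For $\beta>0$: $F_1(\alpha,\beta)=\{j\in\mathbb{Z}:|\theta_\alpha(j)-j\alpha|<\beta\}$ and $F_2(\alpha,\beta)=\{(j,k)\in\mathbb{Z}^2:|k-j\alpha|<\beta\}$. *)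

theory Defs
  imports "HOL-Analysis.Analysis"
begin

text \<open>Characters on the torus; functions on T^d are represented as 1-periodic
functions on R^d (here real and real * real).\<close>

definition ech :: "int \<Rightarrow> real \<Rightarrow> complex" where
  "ech j x = exp (2 * of_real pi * \<i> * of_int j * of_real x)"

definition ech2 :: "int \<times> int \<Rightarrow> real \<times> real \<Rightarrow> complex" where
  "ech2 jk xy = ech (fst jk) (fst xy) * ech (snd jk) (snd xy)"

definition trig1 :: "(real \<Rightarrow> complex) set" where
  "trig1 = {t. \<exists>S c. finite S \<and> t = (\<lambda>x. \<Sum>j\<in>S. c j * ech j x)}"

definition trig2 :: "(real \<times> real \<Rightarrow> complex) set" where
  "trig2 = {t. \<exists>S c. finite S \<and> t = (\<lambda>xy. \<Sum>jk\<in>S. c jk * ech2 jk xy)}"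

definition fourier1 :: "(real \<Rightarrow> complex) \<Rightarrow> int \<Rightarrow> complex" where
  "fourier1 t j = integral {0..1} (\<lambda>x. t x * ech (- j) x)"

definition fourier2 :: "(real \<times> real \<Rightarrow> complex) \<Rightarrow> int \<times> int \<Rightarrow> complex" where
  "fourier2 t jk = integral (cbox (0,0) (1,1)) (\<lambda>xy. t xy * ech2 (- fst jk, - snd jk) xy)"

definition freq1 :: "(real \<Rightarrow> complex) \<Rightarrow> int set" where
  "freq1 t = {j. fourier1 t j \<noteq> 0}"

definition freq2 :: "(real \<times> real \<Rightarrow> complex) \<Rightarrow> (int \<times> int) set" where
  "freq2 t = {jk. fourier2 t jk \<noteq> 0}"

definition T1 :: "int set \<Rightarrow> (real \<Rightarrow> complex) set" where
  "T1 F = {t \<in> trig1. freq1 t \<subseteq> F}"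

definition T2 :: "(int \<times> int) set \<Rightarrow> (real \<times> real \<Rightarrow> complex) set" where
  "T2 F = {t \<in> trig2. freq2 t \<subseteq> F}"

definition S1 :: "int set \<Rightarrow> (real \<Rightarrow> complex) set" where
  "S1 F = {(\<lambda>x. complex_of_real ((cmod (p x))\<^sup>2)) | p. p \<in> T1 F}"

definition S2 :: "(int \<times> int) set \<Rightarrow> (real \<times> real \<Rightarrow> complex) set" where
  "S2 F = {(\<lambda>xy. complex_of_real ((cmod (p xy))\<^sup>2)) | p. p \<in> T2 F}"

definition theta :: "real \<Rightarrow> int \<Rightarrow> int" where
  "theta \<alpha> j = (LEAST k::int. \<forall>m::int. \<bar>real_of_int k - real_of_int j * \<alpha>\<bar> \<le> \<bar>real_of_int m - real_of_int j * \<alpha>\<bar>)"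

definition Theta :: "real \<Rightarrow> (real \<Rightarrow> complex) \<Rightarrow> (real \<times> real \<Rightarrow> complex)" where
  "Theta \<alpha> t = (\<lambda>(x, y). \<Sum>j\<in>freq1 t. fourier1 t j * ech j x * ech (theta \<alpha> j) y)"

definition F1 :: "real \<Rightarrow> real \<Rightarrow> int set" where
  "F1 \<alpha> \<beta> = {j. \<bar>real_of_int (theta \<alpha> j) - real_of_int j * \<alpha>\<bar> < \<beta>}"

definition F2 :: "real \<Rightarrow> real \<Rightarrow> (int \<times> int) set" where
  "F2 \<alpha> \<beta> = {(j, k). \<bar>real_of_int k - real_of_int j * \<alpha>\<bar> < \<beta>}"

end

theory Submission imports Defs begin

text \<open>
  By orthogonality of the characters, a trigonometric polynomial is
  determined by its Fourier coefficients, and the coefficients of a finite sum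
  \<open>\<Sum>j\<in>S. c j * e_j\<close> are just the \<open>c j\<close>.  Hence \<open>\<Theta>\<^sub>\<alpha>\<close> sends \<open>t\<close> to the polynomial
  whose spectrum is the graph \<open>{(j, \<theta>\<^sub>\<alpha> j)}\<close> over \<open>freq t\<close>, with the same
  coefficients; this makes \<open>\<Theta>\<^sub>\<alpha>\<close> injective and maps \<open>F\<^sub>1(\<alpha>,\<gamma>)\<close>-polynomials to
  \<open>F\<^sub>2(\<alpha>,\<gamma>)\<close>-polynomials.  For \<open>\<gamma> \<le> 1/2\<close> every frequency \<open>(j,k)\<close> with \<open>|k - j\<alpha>| < \<gamma>\<close>
  satisfies \<open>k = \<theta>\<^sub>\<alpha> j\<close>, which gives surjectivity.  Finally, on \<open>F\<^sub>1(\<alpha>,\<beta>)\<close> with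
  \<open>\<beta> \<le> 1/4\<close> the map \<open>\<theta>\<^sub>\<alpha>\<close> is additive on differences, so expanding \<open>|p|\<^sup>2\<close> as a double
  sum shows \<open>\<Theta>\<^sub>\<alpha>(|p|\<^sup>2) = |\<Theta>\<^sub>\<alpha> p|\<^sup>2\<close>; together with the bijection this also gives the
  image of the squares.
\<close>

lemma ech_add: "ech a x * ech b x = ech (a + b) x"
  by (simp add: ech_def exp_add[symmetric] algebra_simps)

lemma ech_diff: "ech (a - b) x = ech a x * ech (- b) x"
  by (simp add: ech_add)

lemma ech_zero [simp]: "ech 0 x = 1"
  by (simp add: ech_def)

lemma cnj_ech: "cnj (ech j x) = ech (- j) x"
  by (simp add: ech_def exp_cnj)

lemma continuous_on_ech [continuous_intros]: "continuous_on S (ech j)"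
  unfolding ech_def by (intro continuous_intros)

lemma ech_at_zero [simp]: "ech n 0 = 1"
  by (simp add: ech_def)

lemma ech_one: "ech n 1 = 1"
proof -
  have "ech n 1 = exp ((2 * of_int n * pi) * \<i>)"
    by (simp add: ech_def algebra_simps)
  also have "\<dots> = 1"
    by (rule exp_integer_2pi) simp
  finally show ?thesis .
qed

lemma ech_has_vector_derivative:
  "(ech n has_vector_derivative (2 * of_real pi * \<i> * of_int n) * ech n x) (at x within S)"
  unfolding ech_def
  by (auto intro!: derivative_eq_intros has_vector_derivative_real_field simp: algebra_simps)

lemma integral_ech: "integral {0..1} (ech n) = (if n = 0 then 1 else 0)"
proof (cases "n = 0")
  case False
  define a :: complex where "a = 2 * of_real pi * \<i> * of_int n"
  have "a \<noteq> 0" using False by (simp add: a_def)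
  have "(ech n has_integral (ech n 1 / a - ech n 0 / a)) {0..1}"
  proof (rule fundamental_theorem_of_calculus)
    fix x :: real
    show "((\<lambda>x. ech n x / a) has_vector_derivative ech n x) (at x within {0..1})"
      using has_vector_derivative_mult_right[OF ech_has_vector_derivative[of n x], of "1 / a"] \<open>a \<noteq> 0\<close>
      by (simp add: a_def field_simps)
  qed simp
  then show ?thesis
    using False by (simp add: ech_one integral_unique)
next
  case True
  then have "ech n = (\<lambda>_. 1)" by (simp add: fun_eq_iff)
  then show ?thesis using True by simp
qed

lemma integral_ech_prod:
  "integral (cbox (0,0) (1,1)) (\<lambda>xy. ech a (fst xy) * ech b (snd xy))
     = (if a = 0 \<and> b = 0 then 1 else 0)"
proof -
  have "integral (cbox (0,0) (1,1)) (\<lambda>xy. ech a (fst xy) * ech b (snd xy))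
      = integral (cbox 0 1) (\<lambda>x. integral (cbox 0 1) (\<lambda>y. ech a x * ech b y))"
    using integral_prod_continuous[of 0 0 1 1 "\<lambda>xy. ech a (fst xy) * ech b (snd xy)"]
    by (simp add: continuous_on_mult continuous_on_fst continuous_on_snd continuous_on_id
          continuous_on_compose2[OF continuous_on_ech[of UNIV]])
  also have "\<dots> = integral {0..1} (\<lambda>x. ech a x * (if b = 0 then 1 else 0))"
    by (simp add: cbox_interval integral_ech)
  also have "\<dots> = (if a = 0 \<and> b = 0 then 1 else 0)"
    using integral_ech[of a] by auto
  finally show ?thesis .
qed

lemma fourier1_sum:
  assumes "finite S"
  shows "fourier1 (\<lambda>x. \<Sum>j\<in>S. c j * ech j x) m = (if m \<in> S then c m else 0)"
proof -
  have "fourier1 (\<lambda>x. \<Sum>j\<in>S. c j * ech j x) m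
      = integral {0..1} (\<lambda>x. \<Sum>j\<in>S. c j * ech (j - m) x)"
    unfolding fourier1_def by (simp add: sum_distrib_right mult.assoc ech_add)
  also have "\<dots> = (\<Sum>j\<in>S. c j * integral {0..1} (ech (j - m)))"
    by (subst integral_sum[OF assms])
       (auto intro!: integrable_continuous_interval continuous_intros)
  also have "\<dots> = (if m \<in> S then c m else 0)"
    using assms by (simp add: integral_ech if_distrib cong: if_cong)
  finally show ?thesis .
qed

lemma fourier2_sum:
  assumes "finite S"
  shows "fourier2 (\<lambda>xy. \<Sum>jk\<in>S. c jk * ech2 jk xy) m = (if m \<in> S then c m else 0)"
proof -
  let ?e = "\<lambda>jk xy. ech (fst jk - fst m) (fst xy) * ech (snd jk - snd m) (snd xy)"
  have "fourier2 (\<lambda>xy. \<Sum>jk\<in>S. c jk * ech2 jk xy) m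
      = integral (cbox (0,0) (1,1)) (\<lambda>xy. \<Sum>jk\<in>S. c jk * ?e jk xy)"
    unfolding fourier2_def ech2_def
    by (rule arg_cong[where f="integral _"], rule ext)
       (simp add: sum_distrib_right, rule sum.cong, simp_all add: ech_diff mult_ac)
  also have "\<dots> = (\<Sum>jk\<in>S. c jk * integral (cbox (0,0) (1,1)) (?e jk))"
    by (subst integral_sum[OF assms])
       (auto intro!: integrable_continuous continuous_intros
          continuous_on_compose2[OF continuous_on_ech[of UNIV]])
  also have "\<dots> = (\<Sum>jk\<in>S. c jk * (if jk = m then 1 else 0))"
    by (intro sum.cong refl) (simp add: integral_ech_prod prod_eq_iff)
  also have "\<dots> = (if m \<in> S then c m else 0)"
    using assms by (simp add: if_distrib cong: if_cong)
  finally show ?thesis .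
qed

lemma freq1_sum: "finite S \<Longrightarrow> freq1 (\<lambda>x. \<Sum>j\<in>S. c j * ech j x) = {j\<in>S. c j \<noteq> 0}"
  unfolding freq1_def by (auto simp: fourier1_sum split: if_splits)

lemma freq2_sum: "finite S \<Longrightarrow> freq2 (\<lambda>xy. \<Sum>jk\<in>S. c jk * ech2 jk xy) = {jk\<in>S. c jk \<noteq> 0}"
  unfolding freq2_def by (auto simp: fourier2_sum split: if_splits)

lemma trig1_expand:
  assumes "t \<in> trig1"
  shows "finite (freq1 t) \<and> t = (\<lambda>x. \<Sum>j\<in>freq1 t. fourier1 t j * ech j x)"
proof -
  obtain S c where S: "finite S" and t: "t = (\<lambda>x. \<Sum>j\<in>S. c j * ech j x)"
    using assms unfolding trig1_def by blast
  have "(\<lambda>x. \<Sum>j\<in>{j\<in>S. c j \<noteq> 0}. c j * ech j x) = t"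
    unfolding t by (rule ext, rule sum.mono_neutral_left) (use S in auto)
  then show ?thesis
    using S by (simp add: t freq1_sum fourier1_sum)
qed

lemma trig2_expand:
  assumes "t \<in> trig2"
  shows "finite (freq2 t) \<and> t = (\<lambda>xy. \<Sum>jk\<in>freq2 t. fourier2 t jk * ech2 jk xy)"
proof -
  obtain S c where S: "finite S" and t: "t = (\<lambda>xy. \<Sum>jk\<in>S. c jk * ech2 jk xy)"
    using assms unfolding trig2_def by blast
  have "(\<lambda>xy. \<Sum>jk\<in>{jk\<in>S. c jk \<noteq> 0}. c jk * ech2 jk xy) = t"
    unfolding t by (rule ext, rule sum.mono_neutral_left) (use S in auto)
  then show ?thesis
    using S by (simp add: t freq2_sum fourier2_sum)
qed

text \<open>An integer within distance \<open>1/2\<close> of \<open>j\<alpha>\<close> is the unique nearest one, hence \<open>\<theta>\<^sub>\<alpha> j\<close>.\<close>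
lemma theta_eq:
  assumes "\<bar>real_of_int k - real_of_int j * \<alpha>\<bar> < 1/2"
  shows "theta \<alpha> j = k"
  unfolding theta_def
proof (rule Least_equality)
  show "\<forall>m::int. \<bar>real_of_int k - real_of_int j * \<alpha>\<bar> \<le> \<bar>real_of_int m - real_of_int j * \<alpha>\<bar>"
  proof
    fix m :: int
    show "\<bar>real_of_int k - real_of_int j * \<alpha>\<bar> \<le> \<bar>real_of_int m - real_of_int j * \<alpha>\<bar>"
    proof (cases "m = k")
      case False
      then have "\<bar>m - k\<bar> \<ge> 1" by linarith
      then have "\<bar>real_of_int m - real_of_int k\<bar> \<ge> 1" by linarith
      then show ?thesis using assms by linarith
    qed simp
  qed
next
  fix y :: int
  assume "\<forall>m::int. \<bar>real_of_int y - real_of_int j * \<alpha>\<bar> \<le> \<bar>real_of_int m - real_of_int j * \<alpha>\<bar>"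
  then have "\<bar>real_of_int y - real_of_int j * \<alpha>\<bar> \<le> \<bar>real_of_int k - real_of_int j * \<alpha>\<bar>"
    by blast
  then have "\<bar>real_of_int y - real_of_int k\<bar> < 1"
    using assms by linarith
  then show "k \<le> y" by linarith
qed

text \<open>On frequencies whose rounding error is below \<open>1/4\<close>, \<open>\<theta>\<^sub>\<alpha>\<close> respects differences:
  the errors add up to less than \<open>1/2\<close>.\<close>
lemma theta_diff:
  assumes "j \<in> F1 \<alpha> \<beta>" "j' \<in> F1 \<alpha> \<beta>" "\<beta> \<le> 1/4"
  shows "theta \<alpha> (j - j') = theta \<alpha> j - theta \<alpha> j'"
proof (rule theta_eq)
  have "\<bar>real_of_int (theta \<alpha> j) - real_of_int j * \<alpha>\<bar> < \<beta>"
       "\<bar>real_of_int (theta \<alpha> j') - real_of_int j' * \<alpha>\<bar> < \<beta>"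
    using assms(1,2) by (auto simp: F1_def)
  moreover have "real_of_int (theta \<alpha> j - theta \<alpha> j') - real_of_int (j - j') * \<alpha>
      = (real_of_int (theta \<alpha> j) - real_of_int j * \<alpha>) - (real_of_int (theta \<alpha> j') - real_of_int j' * \<alpha>)"
    by (simp add: algebra_simps)
  ultimately show "\<bar>real_of_int (theta \<alpha> j - theta \<alpha> j') - real_of_int (j - j') * \<alpha>\<bar> < 1/2"
    using assms(3) by linarith
qed

lemma Theta_sum:
  assumes "finite S"
  shows "Theta \<alpha> (\<lambda>x. \<Sum>j\<in>S. c j * ech j x)
       = (\<lambda>(x,y). \<Sum>j\<in>S. c j * ech j x * ech (theta \<alpha> j) y)"
  unfolding Theta_def freq1_sum[OF assms] fourier1_sum[OF assms]
  by (rule ext, clarsimp, rule sum.mono_neutral_cong_left) (use assms in auto)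

lemma sum_group_by:
  fixes c :: "'i \<Rightarrow> 'a::semiring_0"
  assumes "finite I"
  shows "(\<Sum>i\<in>I. c i * g (f i)) = (\<Sum>d\<in>f ` I. (\<Sum>i\<in>{i\<in>I. f i = d}. c i) * g d)"
  by (subst sum.image_gen[OF assms, where g=f]) (simp add: sum_distrib_right)

text \<open>The termwise action persists when frequencies are repeated in the sum, which is
  the form in which \<open>|p|\<^sup>2\<close> arises.\<close>
lemma Theta_sum_indexed:
  assumes "finite I"
  shows "Theta \<alpha> (\<lambda>x. \<Sum>i\<in>I. c i * ech (f i) x)
       = (\<lambda>(x,y). \<Sum>i\<in>I. c i * ech (f i) x * ech (theta \<alpha> (f i)) y)"
  using sum_group_by[OF assms, of c "\<lambda>d. ech d _"]
    sum_group_by[OF assms, of c "\<lambda>d. ech d _ * ech (theta \<alpha> d) _"]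
  by (simp add: Theta_sum[OF finite_imageI[OF assms]] mult.assoc)

lemma Theta_trig1:
  assumes "t \<in> trig1"
  shows "Theta \<alpha> t \<in> trig2"
    and "freq2 (Theta \<alpha> t) = (\<lambda>j. (j, theta \<alpha> j)) ` freq1 t"
    and "fourier2 (Theta \<alpha> t) (j, theta \<alpha> j) = fourier1 t j"
proof -
  let ?g = "\<lambda>j. (j, theta \<alpha> j)"
  have fin: "finite (?g ` freq1 t)"
    using trig1_expand[OF assms] by simp
  have inj: "inj_on ?g (freq1 t)" by (rule inj_onI) simp
  have eq: "Theta \<alpha> t = (\<lambda>xy. \<Sum>jk\<in>?g ` freq1 t. fourier1 t (fst jk) * ech2 jk xy)"
    unfolding Theta_def sum.reindex[OF inj] by (rule ext) (auto simp: ech2_def mult_ac)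
  show "Theta \<alpha> t \<in> trig2"
    unfolding eq trig2_def using fin
    by (intro CollectI exI[of _ "?g ` freq1 t"] exI[of _ "\<lambda>jk. fourier1 t (fst jk)"]) simp
  show "freq2 (Theta \<alpha> t) = ?g ` freq1 t"
    unfolding eq freq2_sum[OF fin] by (auto simp: freq1_def)
  show "fourier2 (Theta \<alpha> t) (j, theta \<alpha> j) = fourier1 t j"
    unfolding eq fourier2_sum[OF fin] by (auto simp: freq1_def)
qed

lemma Theta_inj: "inj_on (Theta \<alpha>) trig1"
proof (rule inj_onI)
  fix s t assume s: "s \<in> trig1" and t: "t \<in> trig1" and "Theta \<alpha> s = Theta \<alpha> t"
  then have "fourier1 s j = fourier1 t j" for j
    using Theta_trig1(3)[OF s, of \<alpha> j] Theta_trig1(3)[OF t, of \<alpha> j] by simp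
  then have "fourier1 s = fourier1 t" by blast
  then show "s = t"
    using trig1_expand[OF s] trig1_expand[OF t] by (simp add: freq1_def)
qed

lemma Theta_maps: "t \<in> T1 (F1 \<alpha> \<gamma>) \<Longrightarrow> Theta \<alpha> t \<in> T2 (F2 \<alpha> \<gamma>)"
  using Theta_trig1[of t \<alpha>] unfolding T1_def T2_def F1_def F2_def by auto

text \<open>Surjectivity: for \<open>\<gamma> \<le> 1/2\<close> the spectrum of any \<open>q\<close> in \<open>T2 (F2 \<alpha> \<gamma>)\<close> lies on the
  graph of \<open>\<theta>\<^sub>\<alpha>\<close>, so \<open>q\<close> is the image of the corresponding one-variable polynomial.\<close>
lemma Theta_surj:
  assumes "\<gamma> \<le> 1/2" and q: "q \<in> T2 (F2 \<alpha> \<gamma>)"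
  shows "\<exists>t\<in>T1 (F1 \<alpha> \<gamma>). Theta \<alpha> t = q"
proof -
  let ?g = "\<lambda>j. (j, theta \<alpha> j)"
  let ?E = "freq2 q" and ?D = "fst ` freq2 q"
  have qE: "?E \<subseteq> F2 \<alpha> \<gamma>" using q by (auto simp: T2_def)
  have fin: "finite ?E" and qeq: "q = (\<lambda>xy. \<Sum>jk\<in>?E. fourier2 q jk * ech2 jk xy)"
    using trig2_expand q by (auto simp: T2_def)
  have on_graph: "jk = ?g (fst jk)" if "jk \<in> ?E" for jk
    using qE that \<open>\<gamma> \<le> 1/2\<close> theta_eq[of "snd jk" "fst jk" \<alpha>] by (auto simp: F2_def)
  have E: "?E = ?g ` ?D"
  proof (intro equalityI subsetI)
    fix jk assume "jk \<in> ?E"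
    then show "jk \<in> ?g ` ?D"
      using on_graph by (metis image_eqI imageI)
  next
    fix jk assume "jk \<in> ?g ` ?D"
    then obtain jk' where "jk' \<in> ?E" "jk = ?g (fst jk')" by blast
    then show "jk \<in> ?E" using on_graph by metis
  qed
  have finD: "finite ?D" using fin by simp
  define t where "t = (\<lambda>x. \<Sum>j\<in>?D. fourier2 q (j, theta \<alpha> j) * ech j x)"
  have "t \<in> trig1"
    unfolding t_def trig1_def using finD
    by (intro CollectI exI[of _ ?D] exI[of _ "\<lambda>j. fourier2 q (j, theta \<alpha> j)"]) simp
  moreover have "freq1 t \<subseteq> F1 \<alpha> \<gamma>"
  proof
    fix j assume "j \<in> freq1 t"
    then have "j \<in> ?D" by (simp add: t_def freq1_sum[OF finD])
    then have "?g j \<in> F2 \<alpha> \<gamma>" using E qE by blast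
    then show "j \<in> F1 \<alpha> \<gamma>" by (simp add: F1_def F2_def)
  qed
  moreover have "Theta \<alpha> t = q"
  proof -
    have inj: "inj_on ?g ?D" by (rule inj_onI) simp
    have "Theta \<alpha> t = (\<lambda>xy. \<Sum>jk\<in>?g ` ?D. fourier2 q jk * ech2 jk xy)"
      unfolding t_def Theta_sum[OF finD] sum.reindex[OF inj] by (rule ext) (auto simp: ech2_def mult_ac)
    then show ?thesis by (simp only: E[symmetric] qeq[symmetric])
  qed
  ultimately show ?thesis by (auto simp: T1_def)
qed

lemma Theta_bij:
  assumes "\<gamma> \<le> 1/2"
  shows "bij_betw (Theta \<alpha>) (T1 (F1 \<alpha> \<gamma>)) (T2 (F2 \<alpha> \<gamma>))"
proof (rule bij_betw_imageI)
  show "inj_on (Theta \<alpha>) (T1 (F1 \<alpha> \<gamma>))"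
    by (rule inj_on_subset[OF Theta_inj]) (auto simp: T1_def)
  show "Theta \<alpha> ` T1 (F1 \<alpha> \<gamma>) = T2 (F2 \<alpha> \<gamma>)"
    using Theta_maps Theta_surj[OF assms] by blast
qed

lemma norm_sum_squared:
  "complex_of_real ((cmod (\<Sum>j\<in>F. a j))\<^sup>2) = (\<Sum>i\<in>F \<times> F. a (fst i) * cnj (a (snd i)))"
proof -
  have "complex_of_real ((cmod (\<Sum>j\<in>F. a j))\<^sup>2) = (\<Sum>j\<in>F. a j) * cnj (\<Sum>j\<in>F. a j)"
    by (rule complex_norm_square)
  also have "\<dots> = (\<Sum>i\<in>F \<times> F. a (fst i) * cnj (a (snd i)))"
    by (simp add: sum_product sum.cartesian_product case_prod_beta)
  finally show ?thesis .
qed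

text \<open>\<open>\<Theta>\<^sub>\<alpha>\<close> commutes with \<open>|\<cdot>|\<^sup>2\<close> on \<open>T1 (F1 \<alpha> \<beta>)\<close>, \<open>\<beta> \<le> 1/4\<close>: both sides are the double
  sum over pairs \<open>(j,j')\<close> of spectrum points, and \<open>\<theta>\<^sub>\<alpha>(j - j') = \<theta>\<^sub>\<alpha> j - \<theta>\<^sub>\<alpha> j'\<close> there.\<close>
lemma Theta_norm_squared:
  assumes p: "p \<in> T1 (F1 \<alpha> \<beta>)" and "\<beta> \<le> 1/4"
  shows "Theta \<alpha> (\<lambda>x. complex_of_real ((cmod (p x))\<^sup>2))
           = (\<lambda>xy. complex_of_real ((cmod (Theta \<alpha> p xy))\<^sup>2))"
proof -
  define F where "F = freq1 p"
  define c where "c = fourier1 p"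
  have finF: "finite F" and peq: "p = (\<lambda>x. \<Sum>j\<in>F. c j * ech j x)"
    using trig1_expand p by (auto simp: T1_def F_def c_def)
  have FF: "F \<subseteq> F1 \<alpha> \<beta>" using p by (auto simp: T1_def F_def)
  let ?C = "\<lambda>i. c (fst i) * cnj (c (snd i))"
  let ?f = "\<lambda>i::int \<times> int. fst i - snd i"
  have sq_p: "(\<lambda>x. complex_of_real ((cmod (p x))\<^sup>2)) = (\<lambda>x. \<Sum>i\<in>F \<times> F. ?C i * ech (?f i) x)"
    unfolding peq norm_sum_squared by (simp add: cnj_ech ech_diff mult_ac)
  have theta_f: "theta \<alpha> (?f i) = theta \<alpha> (fst i) - theta \<alpha> (snd i)" if "i \<in> F \<times> F" for i
    using that FF \<open>\<beta> \<le> 1/4\<close> by (auto intro!: theta_diff)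
  have "Theta \<alpha> (\<lambda>x. complex_of_real ((cmod (p x))\<^sup>2))
      = (\<lambda>(x,y). \<Sum>i\<in>F \<times> F. ?C i * ech (?f i) x * ech (theta \<alpha> (?f i)) y)"
    using finF by (simp only: sq_p Theta_sum_indexed finite_cartesian_product)
  also have "\<dots> = (\<lambda>(x,y). \<Sum>i\<in>F \<times> F. (c (fst i) * ech (fst i) x * ech (theta \<alpha> (fst i)) y)
                    * cnj (c (snd i) * ech (snd i) x * ech (theta \<alpha> (snd i)) y))"
    by (rule ext, clarify, rule sum.cong) (simp_all add: theta_f ech_diff cnj_ech mult_ac)
  also have "\<dots> = (\<lambda>xy. complex_of_real ((cmod (Theta \<alpha> p xy))\<^sup>2))"
    unfolding peq Theta_sum[OF finF] by (rule ext) (simp only: split_beta norm_sum_squared)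
  finally show ?thesis .
qed

lemma Theta_image_squares:
  assumes "\<beta> \<le> 1/4"
  shows "Theta \<alpha> ` S1 (F1 \<alpha> \<beta>) = S2 (F2 \<alpha> \<beta>)"
proof -
  let ?sq1 = "\<lambda>p x. complex_of_real ((cmod (p x))\<^sup>2)"
  let ?sq2 = "\<lambda>q xy. complex_of_real ((cmod (q xy))\<^sup>2)"
  have "Theta \<alpha> ` S1 (F1 \<alpha> \<beta>) = (\<lambda>p. Theta \<alpha> (?sq1 p)) ` T1 (F1 \<alpha> \<beta>)"
    unfolding S1_def Setcompr_eq_image image_image ..
  also have "\<dots> = ?sq2 ` Theta \<alpha> ` T1 (F1 \<alpha> \<beta>)"
    unfolding image_image using Theta_norm_squared[OF _ assms] by (rule image_cong[OF refl])
  also have "\<dots> = S2 (F2 \<alpha> \<beta>)"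
    using bij_betw_imp_surj_on[OF Theta_bij[of \<beta> \<alpha>]] assms
    unfolding S2_def Setcompr_eq_image by simp
  finally show ?thesis .
qed

theorem lemma4:
  fixes \<alpha> \<beta> :: real
  assumes "0 < \<beta>" and "\<beta> \<le> 1/4"
  shows "bij_betw (Theta \<alpha>) (T1 (F1 \<alpha> (2 * \<beta>))) (T2 (F2 \<alpha> (2 * \<beta>)))
    \<and> Theta \<alpha> ` S1 (F1 \<alpha> \<beta>) = S2 (F2 \<alpha> \<beta>)
    \<and> (\<forall>p \<in> T1 (F1 \<alpha> \<beta>).
         Theta \<alpha> (\<lambda>x. complex_of_real ((cmod (p x))\<^sup>2))
           = (\<lambda>xy. complex_of_real ((cmod (Theta \<alpha> p xy))\<^sup>2)))"
proof -
  have "2 * \<beta> \<le> 1/2" using assms(2) by simp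
  then show ?thesis
    using Theta_bij[of "2 * \<beta>" \<alpha>] Theta_image_squares[OF assms(2)] Theta_norm_squared[OF _ assms(2)]
    by simp
qed

end
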